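(* Let $r\ge 1$ and let $G$ be a connected $r$-regular graph. Then $G$ has a strong clique of size two if and only if $G$ is isomorphic to the complete bipartite graph $K_{r,r}$.
   Context: A clique is strong if it intersects every maximal (inclusion-wise) independent set of the graph. *)

theory Defs
  imports Main
begin

definition simple_graph :: "'a set \<Rightarrow> ('a \<Rightarrow> 'a \<Rightarrow> bool) \<Rightarrow> bool" where
  "simple_graph V E \<longleftrightarrow> finite V \<and> (\<forall>u v. E u v \<longrightarrow> u \<in> V \<and> v \<in> V)
     \<and> (\<forall>u v. E u v \<longrightarrow> E v u) \<and> (\<forall>v. \<not> E v v)"

definition neighbours :: "'a set \<Rightarrow> ('a \<Rightarrow> 'a \<Rightarrow> bool) \<Rightarrow> 'a \<Rightarrow> 'a set" where
  "neighbours V E v = {u \<in> V. E v u}"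

definition regular :: "'a set \<Rightarrow> ('a \<Rightarrow> 'a \<Rightarrow> bool) \<Rightarrow> nat \<Rightarrow> bool" where
  "regular V E r \<longleftrightarrow> (\<forall>v \<in> V. card (neighbours V E v) = r)"

definition connected_graph :: "'a set \<Rightarrow> ('a \<Rightarrow> 'a \<Rightarrow> bool) \<Rightarrow> bool" where
  "connected_graph V E \<longleftrightarrow> V \<noteq> {} \<and> (\<forall>u \<in> V. \<forall>v \<in> V. (\<lambda>x y. E x y)\<^sup>*\<^sup>* u v)"

definition clique :: "'a set \<Rightarrow> ('a \<Rightarrow> 'a \<Rightarrow> bool) \<Rightarrow> 'a set \<Rightarrow> bool" where
  "clique V E C \<longleftrightarrow> C \<subseteq> V \<and> (\<forall>u \<in> C. \<forall>v \<in> C. u \<noteq> v \<longrightarrow> E u v)"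

definition independent_set :: "'a set \<Rightarrow> ('a \<Rightarrow> 'a \<Rightarrow> bool) \<Rightarrow> 'a set \<Rightarrow> bool" where
  "independent_set V E I \<longleftrightarrow> I \<subseteq> V \<and> (\<forall>u \<in> I. \<forall>v \<in> I. \<not> E u v)"

definition maximal_independent_set :: "'a set \<Rightarrow> ('a \<Rightarrow> 'a \<Rightarrow> bool) \<Rightarrow> 'a set \<Rightarrow> bool" where
  "maximal_independent_set V E I \<longleftrightarrow> independent_set V E I \<and>
     (\<forall>J. independent_set V E J \<and> I \<subseteq> J \<longrightarrow> J = I)"

definition strong_clique :: "'a set \<Rightarrow> ('a \<Rightarrow> 'a \<Rightarrow> bool) \<Rightarrow> 'a set \<Rightarrow> bool" where
  "strong_clique V E C \<longleftrightarrow> clique V E C \<and>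
     (\<forall>I. maximal_independent_set V E I \<longrightarrow> C \<inter> I \<noteq> {})"

definition Krr_vertices :: "nat \<Rightarrow> (nat \<times> bool) set" where
  "Krr_vertices r = {0..<r} \<times> UNIV"

definition Krr_edge :: "nat \<Rightarrow> nat \<times> bool \<Rightarrow> nat \<times> bool \<Rightarrow> bool" where
  "Krr_edge r x y \<longleftrightarrow> x \<in> Krr_vertices r \<and> y \<in> Krr_vertices r \<and> snd x \<noteq> snd y"

definition graph_iso :: "'a set \<Rightarrow> ('a \<Rightarrow> 'a \<Rightarrow> bool) \<Rightarrow> 'b set \<Rightarrow> ('b \<Rightarrow> 'b \<Rightarrow> bool) \<Rightarrow> bool" where
  "graph_iso V E W F \<longleftrightarrow> (\<exists>f. bij_betw f V W \<and> (\<forall>u \<in> V. \<forall>v \<in> V. E u v \<longleftrightarrow> F (f u) (f v)))"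

end

theory Submission
  imports Defs
begin

text \<open>If the edge ab is strong, then every neighbour x of b is adjacent to every
neighbour y of a: otherwise {x, y} extends to a maximal independent set, which
must contain a or b, yet contains a neighbour of each. Hence N(a) and N(b) are
disjoint and completely joined; r-regularity makes each of them the whole
neighbourhood of the vertices of the other, so by connectivity the graph is the
complete bipartite graph with sides N(b) and N(a), i.e. K_{r,r}. Conversely, in
K_{r,r} a maximal independent set is a whole side, so it meets every edge.\<close>

definition complete_bipartite_by :: "'a set \<Rightarrow> ('a \<Rightarrow> 'a \<Rightarrow> bool) \<Rightarrow> ('a \<Rightarrow> bool) \<Rightarrow> bool" where
  "complete_bipartite_by V E side \<longleftrightarrow> (\<forall>u \<in> V. \<forall>v \<in> V. E u v \<longleftrightarrow> side u \<noteq> side v)"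

lemma independent_set_extends_to_maximal:
  assumes "finite V" "independent_set V E S"
  obtains I where "maximal_independent_set V E I" "S \<subseteq> I"
proof -
  let ?F = "{J. independent_set V E J \<and> S \<subseteq> J}"
  have "finite ?F"
    by (rule finite_subset[of _ "Pow V"]) (auto simp: independent_set_def assms(1))
  moreover have "?F \<noteq> {}"
    using assms(2) by blast
  ultimately obtain I where I: "I \<in> ?F" "\<forall>J\<in>?F. I \<subseteq> J \<longrightarrow> I = J"
    by (meson finite_has_maximal)
  then have "maximal_independent_set V E I"
    unfolding maximal_independent_set_def by blast
  with I show thesis
    using that by blast
qed

lemma strong_edge_neighbours_adjacent:
  assumes graph: "simple_graph V E" and strong: "strong_clique V E {a, b}"
    and "E b x" "E a y"
  shows "E x y"
proof (rule ccontr)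
  assume "\<not> E x y"
  with assms(3,4) graph have "independent_set V E {x, y}"
    unfolding simple_graph_def independent_set_def by blast
  with graph obtain I where I: "maximal_independent_set V E I" "{x, y} \<subseteq> I"
    using independent_set_extends_to_maximal unfolding simple_graph_def by metis
  then have "a \<in> I \<or> b \<in> I"
    using strong unfolding strong_clique_def by blast
  with I assms(3,4) show False
    unfolding maximal_independent_set_def independent_set_def by blast
qed

lemma regular_neighbours_eqI:
  assumes "finite V" "regular V E r" "x \<in> V"
    and "S \<subseteq> neighbours V E x" "card S = r"
  shows "neighbours V E x = S"
proof -
  have "finite (neighbours V E x)"
    using assms(1) unfolding neighbours_def by simp
  then show ?thesis
    using assms card_subset_eq unfolding regular_def by metis
qed

lemma connected_graph_closed_subset_eq:
  assumes graph: "simple_graph V E" and conn: "connected_graph V E"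
    and "U \<subseteq> V" "a \<in> U" and closed: "\<And>u. u \<in> U \<Longrightarrow> neighbours V E u \<subseteq> U"
  shows "U = V"
proof
  show "V \<subseteq> U"
  proof
    fix v assume "v \<in> V"
    with conn assms(3,4) have "E\<^sup>*\<^sup>* a v"
      unfolding connected_graph_def by blast
    then show "v \<in> U"
    proof (induction rule: rtranclp_induct)
      case base
      then show ?case using assms(4) .
    next
      case (step y z)
      then have "z \<in> neighbours V E y"
        using graph unfolding simple_graph_def neighbours_def by blast
      then show ?case using step.IH closed by blast
    qed
  qed
qed (rule assms(3))

lemma complete_bipartite_iso_Krr:
  assumes "finite V" "complete_bipartite_by V E side"
    and "card {v \<in> V. \<not> side v} = r" "card {v \<in> V. side v} = r"
  shows "graph_iso V E (Krr_vertices r) (Krr_edge r)"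
proof -
  have "\<exists>g. bij_betw g {v \<in> V. \<not> side v} {0..<r}"
    by (rule finite_same_card_bij) (use assms(1,3) in auto)
  then obtain g where g: "bij_betw g {v \<in> V. \<not> side v} {0..<r}" ..
  have "\<exists>h. bij_betw h {v \<in> V. side v} {0..<r}"
    by (rule finite_same_card_bij) (use assms(1,4) in auto)
  then obtain h where h: "bij_betw h {v \<in> V. side v} {0..<r}" ..
  define f where "f v = (if side v then h v else g v, side v)" for v
  have "inj_on f V"
  proof (rule inj_onI)
    fix u v assume "u \<in> V" "v \<in> V" "f u = f v"
    then show "u = v"
      using bij_betw_imp_inj_on[OF g] bij_betw_imp_inj_on[OF h]
      unfolding f_def inj_on_def by (cases "side v") auto
  qed
  moreover have "f ` V = Krr_vertices r"
  proof
    show "f ` V \<subseteq> Krr_vertices r"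
      using bij_betwE[OF g] bij_betwE[OF h] unfolding f_def Krr_vertices_def by auto
  next
    show "Krr_vertices r \<subseteq> f ` V"
    proof
      fix p assume "p \<in> Krr_vertices r"
      then obtain i s where p: "p = (i, s)" "i \<in> {0..<r}"
        unfolding Krr_vertices_def by blast
      show "p \<in> f ` V"
      proof (cases s)
        case True
        with p obtain v where "v \<in> V" "side v" "h v = i"
          using bij_betw_imp_surj_on[OF h] by (metis (mono_tags, lifting) imageE mem_Collect_eq)
        with p True show ?thesis
          unfolding f_def by force
      next
        case False
        with p obtain v where "v \<in> V" "\<not> side v" "g v = i"
          using bij_betw_imp_surj_on[OF g] by (metis (mono_tags, lifting) imageE mem_Collect_eq)
        with p False show ?thesis
          unfolding f_def by force
      qed
    qed
  qed
  moreover have "E u v \<longleftrightarrow> Krr_edge r (f u) (f v)" if "u \<in> V" "v \<in> V" for u v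
  proof -
    have "f u \<in> Krr_vertices r" "f v \<in> Krr_vertices r"
      using that \<open>f ` V = Krr_vertices r\<close> by auto
    then show ?thesis
      using that assms(2) unfolding complete_bipartite_by_def Krr_edge_def f_def by simp
  qed
  ultimately show ?thesis
    unfolding graph_iso_def bij_betw_def by blast
qed

lemma Krr_iso_complete_bipartite:
  assumes "graph_iso V E (Krr_vertices r) (Krr_edge r)" "r \<ge> 1"
  obtains side a b where "complete_bipartite_by V E side"
    and "a \<in> V" "b \<in> V" "side a \<noteq> side b"
proof -
  obtain f where bij: "bij_betw f V (Krr_vertices r)"
    and iso: "\<forall>u\<in>V. \<forall>v\<in>V. E u v \<longleftrightarrow> Krr_edge r (f u) (f v)"
    using assms(1) unfolding graph_iso_def by blast
  have "complete_bipartite_by V E (\<lambda>v. snd (f v))"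
    using iso bij_betwE[OF bij] unfolding complete_bipartite_by_def Krr_edge_def by auto
  moreover have "(0, False) \<in> f ` V" "(0, True) \<in> f ` V"
    using assms(2) bij_betw_imp_surj_on[OF bij] unfolding Krr_vertices_def by auto
  then obtain a b where "a \<in> V" "f a = (0, False)" "b \<in> V" "f b = (0, True)"
    by (metis imageE)
  ultimately show thesis
    using that[of "\<lambda>v. snd (f v)" a b] by simp
qed

lemma complete_bipartite_edge_strong_clique:
  assumes cb: "complete_bipartite_by V E side"
    and "a \<in> V" "b \<in> V" "side a \<noteq> side b"
  shows "strong_clique V E {a, b}"
  unfolding strong_clique_def
proof (intro conjI allI impI)
  show "clique V E {a, b}"
    using assms unfolding complete_bipartite_by_def clique_def by auto
next
  fix I assume max: "maximal_independent_set V E I"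
  then have IV: "I \<subseteq> V" and indep: "\<forall>u \<in> I. \<forall>v \<in> I. \<not> E u v"
    unfolding maximal_independent_set_def independent_set_def by auto
  text \<open>An independent set lies on one side, so it can be enlarged by whichever
    of a, b lies on that side.\<close>
  obtain c where c: "c \<in> {a, b}" "\<forall>u \<in> I. side u = side c"
  proof (cases "I = {}")
    case False
    then obtain x where "x \<in> I" by blast
    with IV indep cb have "\<forall>u \<in> I. side u = side x"
      unfolding complete_bipartite_by_def by blast
    with assms(4) that show thesis by (cases "side a = side x") auto
  qed (use that in blast)
  have "independent_set V E (insert c I)"
    using IV indep c assms(2,3) cb unfolding independent_set_def complete_bipartite_by_def
    by auto
  then have "insert c I = I"
    using max unfolding maximal_independent_set_def by blast
  with c show "{a, b} \<inter> I \<noteq> {}"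
    by blast
qed

lemma strong_edge_regular_iso_Krr:
  assumes graph: "simple_graph V E" and conn: "connected_graph V E"
    and reg: "regular V E r" and strong: "strong_clique V E {a, b}" and "a \<noteq> b"
  shows "graph_iso V E (Krr_vertices r) (Krr_edge r)"
proof -
  let ?A = "neighbours V E b" and ?B = "neighbours V E a"
  have finV: "finite V" and sym: "\<And>u v. E u v \<Longrightarrow> E v u" and irr: "\<And>v. \<not> E v v"
    using graph unfolding simple_graph_def by auto
  have ab: "E a b" and aV: "a \<in> V" and bV: "b \<in> V"
    using strong \<open>a \<noteq> b\<close> unfolding strong_clique_def clique_def by auto
  have adj: "E x y" if "x \<in> ?A" "y \<in> ?B" for x y
    using strong_edge_neighbours_adjacent[OF graph strong] that unfolding neighbours_def by blast
  have disj: "?A \<inter> ?B = {}"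
    using adj irr by blast
  have cardA: "card ?A = r" and cardB: "card ?B = r"
    using reg aV bV unfolding regular_def by auto
  have NA: "neighbours V E x = ?B" if "x \<in> ?A" for x
  proof (rule regular_neighbours_eqI[OF finV reg _ _ cardB])
    show "x \<in> V" using that unfolding neighbours_def by blast
    show "?B \<subseteq> neighbours V E x"
      using adj[OF that] unfolding neighbours_def by blast
  qed
  have NB: "neighbours V E y = ?A" if "y \<in> ?B" for y
  proof (rule regular_neighbours_eqI[OF finV reg _ _ cardA])
    show "y \<in> V" using that unfolding neighbours_def by blast
    show "?A \<subseteq> neighbours V E y"
      using adj[OF _ that] sym unfolding neighbours_def by blast
  qed
  have "a \<in> ?A"
    using ab sym aV unfolding neighbours_def by blast
  moreover have "?A \<union> ?B \<subseteq> V"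
    unfolding neighbours_def by blast
  moreover have "neighbours V E u \<subseteq> ?A \<union> ?B" if "u \<in> ?A \<union> ?B" for u
    using that NA NB by blast
  ultimately have V: "?A \<union> ?B = V"
    by (intro connected_graph_closed_subset_eq[OF graph conn]) blast+
  have "complete_bipartite_by V E (\<lambda>v. v \<in> ?B)"
    unfolding complete_bipartite_by_def
  proof (intro ballI)
    fix u v assume u: "u \<in> V" and v: "v \<in> V"
    have E_iff: "E u v \<longleftrightarrow> v \<in> neighbours V E u"
      using v by (simp add: neighbours_def)
    have "v \<in> ?A \<longleftrightarrow> v \<notin> ?B"
      using v V disj by blast
    moreover consider "u \<in> ?A" "u \<notin> ?B" | "u \<in> ?B"
      using u V disj by blast
    ultimately show "E u v \<longleftrightarrow> (u \<in> ?B) \<noteq> (v \<in> ?B)"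
      using E_iff NA NB by cases blast+
  qed
  moreover have "{v \<in> V. v \<notin> ?B} = ?A" "{v \<in> V. v \<in> ?B} = ?B"
    using V disj by auto
  ultimately show ?thesis
    using complete_bipartite_iso_Krr[OF finV, of E "\<lambda>v. v \<in> ?B" r] cardA cardB by simp
qed

theorem mainTheorem11:
  fixes V :: "'a set" and E :: "'a \<Rightarrow> 'a \<Rightarrow> bool" and r :: nat
  assumes "r \<ge> 1"
    and "simple_graph V E"
    and "connected_graph V E"
    and "regular V E r"
  shows "(\<exists>C. strong_clique V E C \<and> card C = 2) \<longleftrightarrow>
         graph_iso V E (Krr_vertices r) (Krr_edge r)"
proof
  assume "\<exists>C. strong_clique V E C \<and> card C = 2"
  then obtain a b where "strong_clique V E {a, b}" "a \<noteq> b"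
    by (metis card_2_iff)
  with assms(2-4) show "graph_iso V E (Krr_vertices r) (Krr_edge r)"
    by (rule strong_edge_regular_iso_Krr)
next
  assume "graph_iso V E (Krr_vertices r) (Krr_edge r)"
  then obtain side a b where "complete_bipartite_by V E side"
    and "a \<in> V" "b \<in> V" "side a \<noteq> side b"
    using assms(1) by (rule Krr_iso_complete_bipartite)
  then have "strong_clique V E {a, b}" "a \<noteq> b"
    by (auto intro: complete_bipartite_edge_strong_clique)
  then show "\<exists>C. strong_clique V E C \<and> card C = 2"
    by (intro exI[of _ "{a, b}"]) auto
qed

end
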